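(* There exist natural numbers $B_0,B_1,B_2,\dots$ such that for every finite set $\Omega$, every algebra $\Sigma$ of subsets of $\Omega$, and every function $\upsilon:\Sigma\to\mathbb{R}$, there exists a set $\mathcal{P}$ of probability measures on $\Sigma$ with $\upsilon(X)=\sup\{\mu(X):\mu\in\mathcal{P}\}$ for all $X\in\Sigma$ if and only if $\upsilon$ satisfies: (UPF1) $\upsilon(\emptyset)=0$; (UPF2) $\upsilon(\Omega)=1$; (UPF3) for all natural numbers $m,n,k\le B_{|\Omega|}$ and all $A,A_1,\dots,A_m\in\Sigma$, if the multiset $\{\!\{A_1,\dots,A_m\}\!\}$ is an $(n,k)$-cover of $(A,\Omega)$, then $k+n\,\upsilon(A)\le\sum_{i=1}^m\upsilon(A_i)$.
   Context: A probability measure on an algebra $\Sigma$ of subsets of $\Omega$ is a finitely additive $\mu:\Sigma\to[0,1]$ with $\mu(\emptyset)=0,\mu(\Omega)=1$. A multiset $\{\!\{A_1,\dots,A_m\}\!\}$ of subsets (not necessarily distinct) covers a set $X$ $n$ times if every $x\in X$ belongs to $A_i$ for at least $n$ distinct indices $i\in\{1,\dots,m\}$. It is an $(n,k)$-cover of $(A,\Omega)$ if it covers $\Omega$ $k$ times and covers $A$ $n+k$ times. *)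

theory Defs
  imports "HOL-Analysis.Analysis"
begin

text \<open>Only values on \<Sigma> matter.\<close>
definition prob_measure_on :: "'a set \<Rightarrow> 'a set set \<Rightarrow> ('a set \<Rightarrow> real) \<Rightarrow> bool" where
  "prob_measure_on \<Omega> \<Sigma> \<mu> \<longleftrightarrow>
     (\<forall>X\<in>\<Sigma>. 0 \<le> \<mu> X \<and> \<mu> X \<le> 1) \<and>
     (\<forall>X\<in>\<Sigma>. \<forall>Y\<in>\<Sigma>. X \<inter> Y = {} \<longrightarrow> \<mu> (X \<union> Y) = \<mu> X + \<mu> Y) \<and>
     \<mu> {} = 0 \<and> \<mu> \<Omega> = 1"

definition covers_times :: "nat \<Rightarrow> (nat \<Rightarrow> 'a set) \<Rightarrow> 'a set \<Rightarrow> nat \<Rightarrow> bool" where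
  "covers_times m A X n \<longleftrightarrow> (\<forall>x\<in>X. n \<le> card {i\<in>{1..m}. x \<in> A i})"

definition nk_cover :: "nat \<Rightarrow> nat \<Rightarrow> nat \<Rightarrow> (nat \<Rightarrow> 'a set) \<Rightarrow> 'a set \<Rightarrow> 'a set \<Rightarrow> bool" where
  "nk_cover n k m A B \<Omega> \<longleftrightarrow> covers_times m A \<Omega> k \<and> covers_times m A B (n + k)"

end

theory Submission
  imports Defs
begin

(* Each probability measure on a finite algebra is a sum of point weights, and an (n,k)-cover
   counts every point at least k times and every point of A at least n + k times; summing the
   weights gives the cover inequality for each measure, hence for their upper envelope.
   Conversely, \<upsilon> is the upper envelope of the probability measures it dominates as soon as,
   for every A \<in> \<Sigma>, the linear system p \<ge> 0, p(\<Omega>) \<ge> 1, p(X) \<le> \<upsilon>(X) for X \<in> \<Sigma>,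
   p(A) \<ge> \<upsilon>(A) in the point weights p is solvable.  By Fourier-Motzkin elimination it is
   solvable unless some nonnegative integer combination of its rows with all coefficients zero
   has a negative right-hand side; such a combination is an (n,k)-cover of (A, \<Omega>) violating
   the cover inequality, and eliminating the |\<Omega>| variables one at a time bounds its
   multipliers by a function of |\<Omega>| alone. *)

lemma exists_separating_point:
  fixes L U :: "'a::linorder set"
  assumes "finite L" "finite U" "\<forall>l\<in>L. \<forall>u\<in>U. l \<le> u"
  shows "\<exists>t. (\<forall>l\<in>L. l \<le> t) \<and> (\<forall>u\<in>U. t \<le> u)"
proof (cases "L = {}")
  case True
  show ?thesis
  proof (cases "U = {}")
    case False
    with True show ?thesis using assms(2) by (intro exI[of _ "Min U"]) auto
  qed (use True in auto)
next
  case False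
  then show ?thesis using assms by (intro exI[of _ "Max L"]) auto
qed

lemma single_variable_inequalities_solvable:
  fixes c s :: "'a \<Rightarrow> real"
  assumes "finite S"
    and zero: "\<forall>l\<in>S. c l = 0 \<longrightarrow> 0 \<le> s l"
    and pairs: "\<forall>l\<in>S. \<forall>u\<in>S. c l > 0 \<longrightarrow> c u < 0 \<longrightarrow> 0 \<le> - c u * s l + c l * s u"
  shows "\<exists>t. \<forall>l\<in>S. c l * t \<le> s l"
proof -
  let ?ratio = "\<lambda>l. s l / c l"
  have "\<exists>t. (\<forall>r\<in>?ratio ` {u\<in>S. c u < 0}. r \<le> t) \<and> (\<forall>r\<in>?ratio ` {l\<in>S. c l > 0}. t \<le> r)"
  proof (rule exists_separating_point)
    show "\<forall>r\<in>?ratio ` {u\<in>S. c u < 0}. \<forall>r'\<in>?ratio ` {l\<in>S. c l > 0}. r \<le> r'"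
      using pairs by (auto simp: divide_simps algebra_simps)
  qed (use assms(1) in auto)
  then obtain t where lower: "\<And>u. u \<in> S \<Longrightarrow> c u < 0 \<Longrightarrow> s u / c u \<le> t"
    and upper: "\<And>l. l \<in> S \<Longrightarrow> c l > 0 \<Longrightarrow> t \<le> s l / c l" by auto
  have "c l * t \<le> s l" if "l \<in> S" for l
  proof (cases "c l" "0::real" rule: linorder_cases)
    case less
    then show ?thesis using lower[OF that] by (simp add: neg_divide_le_eq mult.commute)
  next
    case equal
    then show ?thesis using zero that by simp
  next
    case greater
    then show ?thesis using upper[OF that] by (simp add: pos_le_divide_eq mult.commute)
  qed
  then show ?thesis by blast
qed

(* Eliminating a variable adds two rows weighted by their coefficients of that variable, so
   multipliers and coefficients bounded by K stay bounded by 2 K\<^sup>2. *)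
fun fourier_motzkin_bound :: "nat \<Rightarrow> nat \<Rightarrow> nat" where
  "fourier_motzkin_bound 0 K = K"
| "fourier_motzkin_bound (Suc v) K = fourier_motzkin_bound v (2 * K * K)"

(* A system of rows (\<Sum>i. a j i * p i) \<le> b j, j \<in> J, with integer coefficients; a multiplier
   l :: 'j \<Rightarrow> nat stands for the derived row \<Sum>j. l j * (row j). *)
context
  fixes J :: "'j set" and a :: "'j \<Rightarrow> 'i \<Rightarrow> int"
begin

definition comb_coeff :: "('j \<Rightarrow> nat) \<Rightarrow> 'i \<Rightarrow> int" where
  "comb_coeff l i = (\<Sum>j\<in>J. int (l j) * a j i)"

definition comb_rhs :: "('j \<Rightarrow> real) \<Rightarrow> ('j \<Rightarrow> nat) \<Rightarrow> real" where
  "comb_rhs b l = (\<Sum>j\<in>J. real (l j) * b j)"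

definition comb_lhs :: "'i set \<Rightarrow> ('j \<Rightarrow> nat) \<Rightarrow> ('i \<Rightarrow> real) \<Rightarrow> real" where
  "comb_lhs V l p = (\<Sum>i\<in>V. of_int (comb_coeff l i) * p i)"

lemma comb_coeff_linear:
  "comb_coeff (\<lambda>j. c * l j + d * u j) i = int c * comb_coeff l i + int d * comb_coeff u i"
  unfolding comb_coeff_def by (simp add: sum.distrib sum_distrib_left algebra_simps)

lemma comb_rhs_linear:
  "comb_rhs b (\<lambda>j. c * l j + d * u j) = real c * comb_rhs b l + real d * comb_rhs b u"
  unfolding comb_rhs_def by (simp add: sum.distrib sum_distrib_left algebra_simps)

lemma comb_lhs_linear:
  "comb_lhs V (\<lambda>j. c * l j + d * u j) p = real c * comb_lhs V l p + real d * comb_lhs V u p"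
  unfolding comb_lhs_def comb_coeff_linear by (simp add: sum.distrib sum_distrib_left algebra_simps)

lemma comb_coeff_indicator: "finite J \<Longrightarrow> j \<in> J \<Longrightarrow> comb_coeff (indicator {j}) i = a j i"
  unfolding comb_coeff_def by (simp add: indicator_def)

lemma comb_rhs_indicator: "finite J \<Longrightarrow> j \<in> J \<Longrightarrow> comb_rhs b (indicator {j}) = b j"
  unfolding comb_rhs_def by (simp add: indicator_def)

definition elim_comb :: "'i \<Rightarrow> ('j \<Rightarrow> nat) \<Rightarrow> ('j \<Rightarrow> nat) \<Rightarrow> 'j \<Rightarrow> nat" where
  "elim_comb x l u = (\<lambda>j. nat (- comb_coeff u x) * l j + nat (comb_coeff l x) * u j)"

definition eliminate :: "'i \<Rightarrow> ('j \<Rightarrow> nat) set \<Rightarrow> ('j \<Rightarrow> nat) set" where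
  "eliminate x S = {l\<in>S. comb_coeff l x = 0} \<union>
     (\<lambda>(l, u). elim_comb x l u) ` ({l\<in>S. comb_coeff l x > 0} \<times> {u\<in>S. comb_coeff u x < 0})"

lemma eliminateE:
  assumes "l \<in> eliminate x S"
  obtains "l \<in> S" "comb_coeff l x = 0"
  | v u where "v \<in> S" "u \<in> S" "comb_coeff v x > 0" "comb_coeff u x < 0" "l = elim_comb x v u"
  using assms unfolding eliminate_def by auto

lemma finite_eliminate: "finite S \<Longrightarrow> finite (eliminate x S)"
  unfolding eliminate_def by auto

lemma comb_coeff_elim_comb:
  assumes "comb_coeff l x > 0" "comb_coeff u x < 0"
  shows "comb_coeff (elim_comb x l u) i =
    - comb_coeff u x * comb_coeff l i + comb_coeff l x * comb_coeff u i"
  using assms by (simp add: elim_comb_def comb_coeff_linear)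

lemma comb_lhs_elim_comb:
  assumes "comb_coeff l x > 0" "comb_coeff u x < 0"
  shows "comb_lhs V (elim_comb x l u) p =
    - of_int (comb_coeff u x) * comb_lhs V l p + of_int (comb_coeff l x) * comb_lhs V u p"
  using assms by (simp add: elim_comb_def comb_lhs_linear)

lemma comb_rhs_elim_comb:
  assumes "comb_coeff l x > 0" "comb_coeff u x < 0"
  shows "comb_rhs b (elim_comb x l u) =
    - of_int (comb_coeff u x) * comb_rhs b l + of_int (comb_coeff l x) * comb_rhs b u"
  using assms by (simp add: elim_comb_def comb_rhs_linear)

lemma eliminate_vanishing:
  assumes "\<forall>l\<in>S. \<forall>i. i \<notin> insert x V \<longrightarrow> comb_coeff l i = 0" "l \<in> eliminate x S" "i \<notin> V"
  shows "comb_coeff l i = 0"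
  using assms(2)
proof (cases rule: eliminateE)
  case 1
  then show ?thesis using assms(1,3) by (cases "i = x") auto
next
  case (2 v u)
  then show ?thesis using assms(1,3) by (cases "i = x") (auto simp: comb_coeff_elim_comb)
qed

lemma eliminate_multipliers_bounded:
  assumes mult: "\<forall>l\<in>S. \<forall>j\<in>J. l j \<le> K" and coeff: "\<forall>l\<in>S. \<forall>i. \<bar>comb_coeff l i\<bar> \<le> int K"
    and "l \<in> eliminate x S" "j \<in> J"
  shows "l j \<le> 2 * K * K"
  using assms(3)
proof (cases rule: eliminateE)
  case 1
  have "K \<le> 2 * K * K" by (cases K) auto
  then show ?thesis using 1 mult assms(4) by (meson order_trans)
next
  case (2 v u)
  have "nat (comb_coeff v x) \<le> K" "nat (- comb_coeff u x) \<le> K"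
    using 2 coeff by (auto simp: abs_le_iff nat_le_iff)
  then have "l j \<le> K * K + K * K"
    unfolding 2 elim_comb_def using 2 mult assms(4) by (intro add_mono mult_mono) auto
  then show ?thesis by simp
qed

lemma eliminate_coeff_bounded:
  assumes coeff: "\<forall>l\<in>S. \<forall>i. \<bar>comb_coeff l i\<bar> \<le> int K" and "l \<in> eliminate x S"
  shows "\<bar>comb_coeff l i\<bar> \<le> int (2 * K * K)"
  using assms(2)
proof (cases rule: eliminateE)
  case 1
  have "K \<le> 2 * K * K" by (cases K) auto
  then show ?thesis using 1 coeff by (meson order_trans of_nat_le_iff)
next
  case (2 v u)
  have "\<bar>comb_coeff l i\<bar> \<le> \<bar>- comb_coeff u x * comb_coeff v i\<bar> + \<bar>comb_coeff v x * comb_coeff u i\<bar>"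
    using 2 by (simp only: comb_coeff_elim_comb abs_triangle_ineq)
  also have "\<dots> = \<bar>comb_coeff u x\<bar> * \<bar>comb_coeff v i\<bar> + \<bar>comb_coeff v x\<bar> * \<bar>comb_coeff u i\<bar>"
    by (simp add: abs_mult)
  also have "\<dots> \<le> int K * int K + int K * int K"
    using 2 coeff by (intro add_mono mult_mono) (blast | simp)+
  finally show ?thesis by simp
qed

lemma comb_lhs_insert_fun_upd:
  assumes "finite V" "x \<notin> V"
  shows "comb_lhs (insert x V) l (p(x := t)) = of_int (comb_coeff l x) * t + comb_lhs V l p"
proof -
  have "(\<Sum>i\<in>V. of_int (comb_coeff l i) * (p(x := t)) i) = comb_lhs V l p"
    using assms(2) unfolding comb_lhs_def by (intro sum.cong) auto
  then show ?thesis using assms by (simp add: comb_lhs_def)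
qed

lemma feasible_if_eliminate_feasible:
  assumes "finite V" "x \<notin> V" "finite S"
    and p: "\<forall>l\<in>eliminate x S. comb_lhs V l p \<le> comb_rhs b l"
  shows "\<exists>q. \<forall>l\<in>S. comb_lhs (insert x V) l q \<le> comb_rhs b l"
proof -
  let ?c = "\<lambda>l. real_of_int (comb_coeff l x)"
  let ?s = "\<lambda>l. comb_rhs b l - comb_lhs V l p"
  have "\<exists>t. \<forall>l\<in>S. ?c l * t \<le> ?s l"
  proof (rule single_variable_inequalities_solvable)
    show "\<forall>l\<in>S. ?c l = 0 \<longrightarrow> 0 \<le> ?s l"
      using p by (simp add: eliminate_def)
    show "\<forall>l\<in>S. \<forall>u\<in>S. ?c l > 0 \<longrightarrow> ?c u < 0 \<longrightarrow> 0 \<le> - ?c u * ?s l + ?c l * ?s u"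
    proof (intro ballI impI)
      fix l u assume "l \<in> S" "u \<in> S" "?c l > 0" "?c u < 0"
      then have "elim_comb x l u \<in> eliminate x S" by (auto simp: eliminate_def)
      then have "comb_lhs V (elim_comb x l u) p \<le> comb_rhs b (elim_comb x l u)" using p by blast
      then show "0 \<le> - ?c u * ?s l + ?c l * ?s u"
        using \<open>?c l > 0\<close> \<open>?c u < 0\<close>
        by (simp add: comb_lhs_elim_comb comb_rhs_elim_comb algebra_simps)
    qed
  qed (fact assms)
  then obtain t where "\<forall>l\<in>S. ?c l * t \<le> ?s l" ..
  then show ?thesis
    using assms(1,2) by (intro exI[of _ "p(x := t)"]) (simp add: comb_lhs_insert_fun_upd le_diff_eq)
qed

lemma fourier_motzkin:
  assumes "finite V" "finite S"
    and "\<forall>l\<in>S. \<forall>i. i \<notin> V \<longrightarrow> comb_coeff l i = 0"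
    and "\<forall>l\<in>S. \<forall>j\<in>J. l j \<le> K" "\<forall>l\<in>S. \<forall>i. \<bar>comb_coeff l i\<bar> \<le> int K"
    and "\<forall>l. (\<forall>i. comb_coeff l i = 0) \<longrightarrow>
      (\<forall>j\<in>J. l j \<le> fourier_motzkin_bound (card V) K) \<longrightarrow> 0 \<le> comb_rhs b l"
  shows "\<exists>p. \<forall>l\<in>S. comb_lhs V l p \<le> comb_rhs b l"
  using assms
proof (induction V arbitrary: S K rule: finite_induct)
  case empty
  then show ?case by (auto simp: comb_lhs_def)
next
  case (insert x V)
  have "\<exists>p. \<forall>l\<in>eliminate x S. comb_lhs V l p \<le> comb_rhs b l"
  proof (rule insert.IH)
    show "finite (eliminate x S)" using insert.prems(1) by (rule finite_eliminate)
    show "\<forall>l\<in>eliminate x S. \<forall>i. i \<notin> V \<longrightarrow> comb_coeff l i = 0"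
      using insert.prems(2) eliminate_vanishing by blast
    show "\<forall>l\<in>eliminate x S. \<forall>j\<in>J. l j \<le> 2 * K * K"
      using insert.prems(3,4) eliminate_multipliers_bounded by blast
    show "\<forall>l\<in>eliminate x S. \<forall>i. \<bar>comb_coeff l i\<bar> \<le> int (2 * K * K)"
      using insert.prems(4) eliminate_coeff_bounded by blast
    show "\<forall>l. (\<forall>i. comb_coeff l i = 0) \<longrightarrow>
        (\<forall>j\<in>J. l j \<le> fourier_motzkin_bound (card V) (2 * K * K)) \<longrightarrow> 0 \<le> comb_rhs b l"
      using insert.prems(5) insert.hyps by simp
  qed
  then show ?case using feasible_if_eliminate_feasible insert.hyps insert.prems(1) by blast
qed

end

lemma nk_cover_weighted:
  fixes w :: "'a \<Rightarrow> real"
  assumes fin: "finite \<Omega>" and w0: "\<forall>x\<in>\<Omega>. 0 \<le> w x" and w1: "(\<Sum>x\<in>\<Omega>. w x) = 1"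
    and A: "A \<subseteq> \<Omega>" and As: "\<forall>i\<in>{1..m}. As i \<subseteq> \<Omega>" and cover: "nk_cover n k m As A \<Omega>"
  shows "real k + real n * (\<Sum>x\<in>A. w x) \<le> (\<Sum>i=1..m. \<Sum>x\<in>As i. w x)"
proof -
  let ?mult = "\<lambda>x. real (card {i\<in>{1..m}. x \<in> As i})"
  have "real k + real n * (\<Sum>x\<in>A. w x)
      = real k * (\<Sum>x\<in>\<Omega>. w x) + real n * (\<Sum>x\<in>\<Omega>. if x \<in> A then w x else 0)"
    using A fin w1 by (simp add: sum.inter_restrict[symmetric] Int_absorb1)
  also have "\<dots> = (\<Sum>x\<in>\<Omega>. w x * (real k + (if x \<in> A then real n else 0)))"
    unfolding sum_distrib_left sum.distrib[symmetric] by (intro sum.cong) (auto simp: algebra_simps)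
  also have "\<dots> \<le> (\<Sum>x\<in>\<Omega>. w x * ?mult x)"
    using w0 cover by (intro sum_mono mult_left_mono) (auto simp: nk_cover_def covers_times_def)
  also have "\<dots> = (\<Sum>x\<in>\<Omega>. \<Sum>i=1..m. if x \<in> As i then w x else 0)"
    by (simp add: sum.inter_filter[symmetric] mult.commute)
  also have "\<dots> = (\<Sum>i=1..m. \<Sum>x\<in>As i. w x)"
    using As fin by (subst sum.swap) (simp add: sum.If_cases Int_absorb1)
  finally show ?thesis .
qed

context algebra
begin

definition atom :: "'a \<Rightarrow> 'a set" where
  "atom x = (\<Inter>X\<in>{X\<in>M. x \<in> X}. X)"

lemma finite_sets: "finite \<Omega> \<Longrightarrow> finite M"
  using sets_into_space by (meson PowI finite_Pow_iff finite_subset subsetI)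

lemma atom_in_sets: "finite \<Omega> \<Longrightarrow> x \<in> \<Omega> \<Longrightarrow> atom x \<in> M"
  unfolding atom_def using finite_sets by (intro finite_INT) auto

lemma mem_atom: "x \<in> atom x"
  by (auto simp: atom_def)

lemma atom_subset: "X \<in> M \<Longrightarrow> x \<in> X \<Longrightarrow> atom x \<subseteq> X"
  by (auto simp: atom_def)

lemma atom_eq:
  assumes "finite \<Omega>" "x \<in> \<Omega>" "y \<in> atom x"
  shows "atom y = atom x"
proof
  have x: "atom x \<in> M" using assms(1,2) by (rule atom_in_sets)
  then have y: "y \<in> \<Omega>" using assms(3) sets_into_space by blast
  show "atom y \<subseteq> atom x" using x assms(3) by (rule atom_subset)
  have "x \<in> atom y"
  proof (rule ccontr)
    assume "x \<notin> atom y"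
    then have "atom x \<subseteq> atom x - atom y"
      using x atom_in_sets[OF assms(1) y] by (intro atom_subset) (auto simp: mem_atom)
    then show False using assms(3) mem_atom[of y] by blast
  qed
  then show "atom x \<subseteq> atom y" by (intro atom_subset atom_in_sets[OF assms(1) y])
qed

definition atom_weight :: "('a set \<Rightarrow> real) \<Rightarrow> 'a \<Rightarrow> real" where
  "atom_weight \<mu> x = \<mu> (atom x) / card (atom x)"

lemma atom_weight_nonneg:
  "finite \<Omega> \<Longrightarrow> prob_measure_on \<Omega> M \<mu> \<Longrightarrow> x \<in> \<Omega> \<Longrightarrow> 0 \<le> atom_weight \<mu> x"
  using atom_in_sets by (simp add: atom_weight_def prob_measure_on_def)

lemma sum_atom_weight_atom:
  assumes "finite \<Omega>" "x \<in> \<Omega>"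
  shows "(\<Sum>y\<in>atom x. atom_weight \<mu> y) = \<mu> (atom x)"
proof -
  have "finite (atom x)"
    using atom_in_sets[OF assms] sets_into_space assms(1) finite_subset by blast
  then have "card (atom x) > 0" using mem_atom card_gt_0_iff by blast
  then show ?thesis using atom_eq[OF assms] by (simp add: atom_weight_def)
qed

lemma prob_measure_eq_sum_atom_weight:
  assumes fin: "finite \<Omega>" and \<mu>: "prob_measure_on \<Omega> M \<mu>" and "X \<in> M"
  shows "\<mu> X = (\<Sum>x\<in>X. atom_weight \<mu> x)"
  using \<open>X \<in> M\<close>
proof (induction "card X" arbitrary: X rule: less_induct)
  case less
  show ?case
  proof (cases "X = {}")
    case True
    then show ?thesis using \<mu> by (simp add: prob_measure_on_def)
  next
    case False
    then obtain x where x: "x \<in> X" by auto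
    have finX: "finite X" using less.prems sets_into_space fin finite_subset by blast
    have x\<Omega>: "x \<in> \<Omega>" using x less.prems sets_into_space by blast
    have atom: "atom x \<in> M" "atom x \<subseteq> X"
      using atom_in_sets[OF fin x\<Omega>] atom_subset[OF less.prems x] by auto
    have rest: "X - atom x \<in> M" using atom less.prems by auto
    have "card (X - atom x) < card X"
      using finX mem_atom[of x] x by (intro psubset_card_mono) auto
    then have IH: "\<mu> (X - atom x) = (\<Sum>y\<in>X - atom x. atom_weight \<mu> y)"
      using rest by (rule less.hyps)
    have "\<mu> X = \<mu> (atom x \<union> (X - atom x))" using atom by (simp add: Un_absorb1)
    also have "\<dots> = \<mu> (atom x) + \<mu> (X - atom x)"
      using \<mu> atom rest Diff_disjoint unfolding prob_measure_on_def by blast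
    also have "\<dots> = (\<Sum>y\<in>X. atom_weight \<mu> y)"
      using IH sum_atom_weight_atom[OF fin x\<Omega>] atom finX
      by (simp add: sum.subset_diff[of "atom x" X])
    finally show ?thesis .
  qed
qed

lemma prob_measure_on_weights:
  assumes fin: "finite \<Omega>" and p0: "\<forall>x\<in>\<Omega>. 0 \<le> p x" and p1: "(\<Sum>x\<in>\<Omega>. p x) = 1"
  shows "prob_measure_on \<Omega> M (\<lambda>X. \<Sum>x\<in>X. p x)"
  unfolding prob_measure_on_def
proof (intro conjI ballI impI)
  fix X assume "X \<in> M"
  then have X: "X \<subseteq> \<Omega>" using sets_into_space by blast
  show "0 \<le> (\<Sum>x\<in>X. p x)" using X p0 by (intro sum_nonneg) auto
  have "(\<Sum>x\<in>X. p x) \<le> (\<Sum>x\<in>\<Omega>. p x)" using X p0 fin by (intro sum_mono2) auto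
  then show "(\<Sum>x\<in>X. p x) \<le> 1" using p1 by simp
  fix Y assume Y: "Y \<in> M" "X \<inter> Y = {}"
  have "finite X" using X fin by (rule finite_subset)
  moreover have "finite Y" using sets_into_space[OF Y(1)] fin by (rule finite_subset)
  ultimately show "(\<Sum>x\<in>X \<union> Y. p x) = (\<Sum>x\<in>X. p x) + (\<Sum>x\<in>Y. p x)"
    using Y(2) by (rule sum.union_disjoint)
qed (use p1 in simp_all)

lemma prob_measure_nk_cover:
  assumes fin: "finite \<Omega>" and \<mu>: "prob_measure_on \<Omega> M \<mu>"
    and A: "A \<in> M" and As: "\<forall>i\<in>{1..m}. As i \<in> M" and cover: "nk_cover n k m As A \<Omega>"
  shows "real k + real n * \<mu> A \<le> (\<Sum>i=1..m. \<mu> (As i))"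
proof -
  have w: "\<mu> X = (\<Sum>x\<in>X. atom_weight \<mu> x)" if "X \<in> M" for X
    using fin \<mu> that by (rule prob_measure_eq_sum_atom_weight)
  have "(\<Sum>x\<in>\<Omega>. atom_weight \<mu> x) = 1" using w[OF top] \<mu> by (simp add: prob_measure_on_def)
  then have "real k + real n * (\<Sum>x\<in>A. atom_weight \<mu> x) \<le> (\<Sum>i=1..m. \<Sum>x\<in>As i. atom_weight \<mu> x)"
    using fin atom_weight_nonneg[OF fin \<mu>] A As cover sets_into_space
    by (intro nk_cover_weighted) auto
  then show ?thesis using w A As by simp
qed

lemma upper_envelope_nk_cover:
  assumes fin: "finite \<Omega>" and P: "\<forall>\<mu>\<in>P. prob_measure_on \<Omega> M \<mu>" "P \<noteq> {}"
    and \<upsilon>: "\<forall>X\<in>M. \<upsilon> X = (SUP \<mu>\<in>P. \<mu> X)"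
    and A: "A \<in> M" and As: "\<forall>i\<in>{1..m}. As i \<in> M" and cover: "nk_cover n k m As A \<Omega>"
  shows "real k + real n * \<upsilon> A \<le> (\<Sum>i=1..m. \<upsilon> (As i))"
proof -
  have below: "\<mu> X \<le> \<upsilon> X" if "X \<in> M" "\<mu> \<in> P" for X \<mu>
  proof -
    have "bdd_above ((\<lambda>\<mu>. \<mu> X) ` P)"
      using P(1) that(1) by (intro bdd_aboveI2[of _ _ 1]) (auto simp: prob_measure_on_def)
    then show ?thesis using \<upsilon> that cSUP_upper[OF that(2)] by simp
  qed
  let ?R = "\<Sum>i=1..m. \<upsilon> (As i)"
  have each: "real k + real n * \<mu> A \<le> ?R" if "\<mu> \<in> P" for \<mu>
  proof -
    have "real k + real n * \<mu> A \<le> (\<Sum>i=1..m. \<mu> (As i))"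
      using P(1) that fin A As cover by (intro prob_measure_nk_cover) auto
    also have "\<dots> \<le> ?R" using below As that by (intro sum_mono) auto
    finally show ?thesis .
  qed
  show ?thesis
  proof (cases "n = 0")
    case True
    then show ?thesis using each P(2) by auto
  next
    case False
    have "\<upsilon> A \<le> (?R - real k) / real n"
      unfolding \<upsilon>[rule_format, OF A] using P(2)
    proof (rule cSUP_least)
      fix \<mu> assume "\<mu> \<in> P"
      then have "real n * \<mu> A \<le> ?R - real k" using each by fastforce
      then show "\<mu> A \<le> (?R - real k) / real n"
        using False by (simp add: pos_le_divide_eq mult.commute)
    qed
    then show ?thesis using False by (simp add: pos_le_divide_eq mult.commute)
  qed
qed

lemma upper_envelope_normalized:
  assumes "\<forall>\<mu>\<in>P. prob_measure_on \<Omega> M \<mu>" "P \<noteq> {}" "\<forall>X\<in>M. \<upsilon> X = (SUP \<mu>\<in>P. \<mu> X)"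
  shows "\<upsilon> {} = 0" "\<upsilon> \<Omega> = 1"
proof -
  have "\<upsilon> {} = (SUP \<mu>\<in>P. 0)" "\<upsilon> \<Omega> = (SUP \<mu>\<in>P. 1)"
    using assms(1,3) by (auto simp: prob_measure_on_def intro!: SUP_cong)
  then show "\<upsilon> {} = 0" "\<upsilon> \<Omega> = 1" using assms(2) by simp_all
qed

end

lemma enumerate_multiplicities:
  fixes f :: "'a \<Rightarrow> nat"
  assumes "finite T"
  obtains m and As :: "nat \<Rightarrow> 'a" where "m = (\<Sum>X\<in>T. f X)" and "\<forall>i\<in>{1..m}. As i \<in> T"
    and "\<forall>g :: 'a \<Rightarrow> real. (\<Sum>i=1..m. g (As i)) = (\<Sum>X\<in>T. real (f X) * g X)"
    and "\<forall>P. card {i\<in>{1..m}. P (As i)} = (\<Sum>X\<in>{X\<in>T. P X}. f X)"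
proof -
  obtain xs where xs: "set xs = T" "distinct xs" using finite_distinct_list[OF assms] by blast
  define ys where "ys = concat (map (\<lambda>X. replicate (f X) X) xs)"
  have sum_ys: "(\<Sum>i=1..length ys. g (ys ! (i - 1))) = (\<Sum>X\<in>T. of_nat (f X) * g X)"
    for g :: "'a \<Rightarrow> 'b::comm_semiring_1"
  proof -
    have "(\<Sum>i=1..length ys. g (ys ! (i - 1))) = (\<Sum>i<length ys. g (ys ! i))"
      by (simp add: sum.atLeast1_atMost_eq)
    also have "\<dots> = sum_list (map g ys)"
      by (simp add: sum_list_sum_nth atLeast0LessThan)
    also have "\<dots> = sum_list (map (\<lambda>X. of_nat (f X) * g X) xs)"
      unfolding ys_def by (induction xs) (simp_all add: sum_list_replicate)
    finally show ?thesis using xs by (simp add: sum_list_distinct_conv_sum_set)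
  qed
  show ?thesis
  proof
    show "length ys = (\<Sum>X\<in>T. f X)" using sum_ys[of "\<lambda>_. 1 :: nat"] by simp
    have "set ys \<subseteq> T" using xs by (auto simp: ys_def)
    show "\<forall>i\<in>{1..length ys}. ys ! (i - 1) \<in> T"
    proof
      fix i assume "i \<in> {1..length ys}"
      then have "ys ! (i - 1) \<in> set ys" by (intro nth_mem) auto
      with \<open>set ys \<subseteq> T\<close> show "ys ! (i - 1) \<in> T" by blast
    qed
    show "\<forall>g. (\<Sum>i=1..length ys. g (ys ! (i - 1))) = (\<Sum>X\<in>T. real (f X) * g X)"
      using sum_ys by blast
    show "\<forall>P. card {i\<in>{1..length ys}. P (ys ! (i - 1))} = (\<Sum>X\<in>{X\<in>T. P X}. f X)"
    proof
      fix P
      have "card {i\<in>{1..length ys}. P (ys ! (i - 1))}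
          = (\<Sum>i=1..length ys. if P (ys ! (i - 1)) then 1 else 0)"
        by (simp add: sum.inter_filter[symmetric])
      also have "\<dots> = (\<Sum>X\<in>T. f X * (if P X then 1 else 0))"
        using sum_ys[of "\<lambda>X. if P X then 1 else 0 :: nat"] by simp
      also have "\<dots> = (\<Sum>X\<in>{X\<in>T. P X}. f X)"
        using assms by (simp add: sum.inter_filter if_distrib cong: if_cong)
      finally show "card {i\<in>{1..length ys}. P (ys ! (i - 1))} = (\<Sum>X\<in>{X\<in>T. P X}. f X)" .
    qed
  qed
qed

lemma sum_of_int_if_mem:
  fixes p :: "'a \<Rightarrow> real"
  assumes "finite \<Omega>" "X \<subseteq> \<Omega>"
  shows "(\<Sum>x\<in>\<Omega>. of_int (if x \<in> X then c else 0) * p x) = of_int c * (\<Sum>x\<in>X. p x)"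
proof -
  have "(\<Sum>x\<in>\<Omega>. of_int (if x \<in> X then c else 0) * p x) = (\<Sum>x\<in>\<Omega>. if x \<in> X then of_int c * p x else 0)"
    by (intro sum.cong) auto
  also have "\<dots> = of_int c * (\<Sum>x\<in>X. p x)"
    using assms by (simp add: sum.inter_restrict[symmetric] Int_absorb1 sum_distrib_left)
  finally show ?thesis .
qed

(* The rows p(X) \<le> \<upsilon>(X), p(A) \<ge> \<upsilon>(A), p(\<Omega>) \<ge> 1 and p(y) \<ge> 0 on point weights p,
   all written as upper bounds. *)
datatype 'a constraint = Dominated "'a set" | Attained | Normalized | Nonneg 'a

fun constraint_coeff :: "'a set \<Rightarrow> 'a set \<Rightarrow> 'a constraint \<Rightarrow> 'a \<Rightarrow> int" where
  "constraint_coeff \<Omega> A (Dominated X) x = (if x \<in> X then 1 else 0)"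
| "constraint_coeff \<Omega> A Attained x = (if x \<in> A then -1 else 0)"
| "constraint_coeff \<Omega> A Normalized x = (if x \<in> \<Omega> then -1 else 0)"
| "constraint_coeff \<Omega> A (Nonneg y) x = (if x = y then -1 else 0)"

fun constraint_rhs :: "('a set \<Rightarrow> real) \<Rightarrow> 'a set \<Rightarrow> 'a constraint \<Rightarrow> real" where
  "constraint_rhs \<upsilon> A (Dominated X) = \<upsilon> X"
| "constraint_rhs \<upsilon> A Attained = - \<upsilon> A"
| "constraint_rhs \<upsilon> A Normalized = -1"
| "constraint_rhs \<upsilon> A (Nonneg y) = 0"

definition constraints :: "'a set \<Rightarrow> 'a set set \<Rightarrow> 'a constraint set" where
  "constraints \<Omega> \<Sigma> = Dominated ` \<Sigma> \<union> Nonneg ` \<Omega> \<union> {Attained, Normalized}"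

lemma finite_constraints: "finite \<Omega> \<Longrightarrow> finite \<Sigma> \<Longrightarrow> finite (constraints \<Omega> \<Sigma>)"
  by (simp add: constraints_def)

lemma sum_constraints:
  assumes "finite \<Omega>" "finite \<Sigma>"
  shows "(\<Sum>j\<in>constraints \<Omega> \<Sigma>. g j) =
    (\<Sum>X\<in>\<Sigma>. g (Dominated X)) + (\<Sum>y\<in>\<Omega>. g (Nonneg y)) + g Attained + g Normalized"
proof -
  have "sum g (Dominated ` \<Sigma> \<union> Nonneg ` \<Omega>) = (\<Sum>X\<in>\<Sigma>. g (Dominated X)) + (\<Sum>y\<in>\<Omega>. g (Nonneg y))"
    using assms by (subst sum.union_disjoint) (auto simp: sum.reindex inj_on_def)
  then show ?thesis using assms by (simp add: constraints_def image_iff ac_simps)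
qed

(* A certificate lists at most |\<Sigma>| \<le> 2^|\<Omega>| sets, each with multiplicity at most the
   elimination bound. *)
definition cover_bound :: "nat \<Rightarrow> nat" where
  "cover_bound N = 2 ^ N * fourier_motzkin_bound N 1"

definition nk_cover_inequalities :: "nat \<Rightarrow> 'a set \<Rightarrow> 'a set set \<Rightarrow> ('a set \<Rightarrow> real) \<Rightarrow> bool" where
  "nk_cover_inequalities N \<Omega> \<Sigma> \<upsilon> \<longleftrightarrow>
     (\<forall>m n k. m \<le> N \<longrightarrow> n \<le> N \<longrightarrow> k \<le> N \<longrightarrow>
        (\<forall>A As. A \<in> \<Sigma> \<longrightarrow> (\<forall>i\<in>{1..m}. As i \<in> \<Sigma>) \<longrightarrow> nk_cover n k m As A \<Omega> \<longrightarrow>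
           real k + real n * \<upsilon> A \<le> (\<Sum>i=1..m. \<upsilon> (As i))))"

context algebra
begin

lemma certificate_nk_cover:
  fixes l :: "'a constraint \<Rightarrow> nat"
  assumes fin: "finite \<Omega>" and A: "A \<in> M"
    and zero: "\<forall>x. comb_coeff (constraints \<Omega> M) (constraint_coeff \<Omega> A) l x = 0"
  obtains m As where "m = (\<Sum>X\<in>M. l (Dominated X))" "\<forall>i\<in>{1..m}. As i \<in> M"
    "nk_cover (l Attained) (l Normalized) m As A \<Omega>"
    "comb_rhs (constraints \<Omega> M) (constraint_rhs \<upsilon> A) l
       = (\<Sum>i=1..m. \<upsilon> (As i)) - real (l Attained) * \<upsilon> A - real (l Normalized)"
proof -
  have finM: "finite M" using fin by (rule finite_sets)
  obtain m :: nat and As where m: "m = (\<Sum>X\<in>M. l (Dominated X))" and As: "\<forall>i\<in>{1..m}. As i \<in> M"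
    and sums: "\<forall>g. (\<Sum>i=1..m. g (As i)) = (\<Sum>X\<in>M. real (l (Dominated X)) * g X)"
    and count: "\<forall>P. card {i\<in>{1..m}. P (As i)} = (\<Sum>X\<in>{X\<in>M. P X}. l (Dominated X))"
    by (rule enumerate_multiplicities[OF finM])
  have multiplicity: "int (card {i\<in>{1..m}. x \<in> As i})
      = int (l Normalized) + (if x \<in> A then int (l Attained) else 0) + int (l (Nonneg x))"
    if "x \<in> \<Omega>" for x
  proof -
    have "0 = comb_coeff (constraints \<Omega> M) (constraint_coeff \<Omega> A) l x" using zero by simp
    also have "\<dots> = int (\<Sum>X\<in>{X\<in>M. x \<in> X}. l (Dominated X)) - int (l (Nonneg x))
        - (if x \<in> A then int (l Attained) else 0) - int (l Normalized)"
      using fin finM that unfolding comb_coeff_def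
      by (simp add: sum_constraints of_nat_sum sum.inter_filter if_distrib cong: if_cong)
    also have "(\<Sum>X\<in>{X\<in>M. x \<in> X}. l (Dominated X)) = card {i\<in>{1..m}. x \<in> As i}"
      using count by simp
    finally show ?thesis by simp
  qed
  have "nk_cover (l Attained) (l Normalized) m As A \<Omega>"
    unfolding nk_cover_def covers_times_def
  proof (intro conjI ballI)
    fix x assume "x \<in> \<Omega>"
    from multiplicity[OF this] show "l Normalized \<le> card {i\<in>{1..m}. x \<in> As i}"
      by (cases "x \<in> A") simp_all
  next
    fix x assume "x \<in> A"
    with A sets_into_space have "x \<in> \<Omega>" by blast
    from multiplicity[OF this] \<open>x \<in> A\<close> show "l Attained + l Normalized \<le> card {i\<in>{1..m}. x \<in> As i}"
      by simp
  qed
  moreover have "comb_rhs (constraints \<Omega> M) (constraint_rhs \<upsilon> A) l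
      = (\<Sum>i=1..m. \<upsilon> (As i)) - real (l Attained) * \<upsilon> A - real (l Normalized)"
    using fin finM sums[rule_format, of \<upsilon>] unfolding comb_rhs_def by (simp add: sum_constraints)
  ultimately show ?thesis using that m As by blast
qed

lemma certificate_rhs_nonneg:
  fixes l :: "'a constraint \<Rightarrow> nat"
  assumes fin: "finite \<Omega>" and A: "A \<in> M"
    and ineqs: "nk_cover_inequalities (cover_bound (card \<Omega>)) \<Omega> M \<upsilon>"
    and zero: "\<forall>x. comb_coeff (constraints \<Omega> M) (constraint_coeff \<Omega> A) l x = 0"
    and bounded: "\<forall>j\<in>constraints \<Omega> M. l j \<le> fourier_motzkin_bound (card \<Omega>) 1"
  shows "0 \<le> comb_rhs (constraints \<Omega> M) (constraint_rhs \<upsilon> A) l"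
proof -
  obtain m As where m: "m = (\<Sum>X\<in>M. l (Dominated X))" and As: "\<forall>i\<in>{1..m}. As i \<in> M"
    and cover: "nk_cover (l Attained) (l Normalized) m As A \<Omega>"
    and rhs: "comb_rhs (constraints \<Omega> M) (constraint_rhs \<upsilon> A) l
      = (\<Sum>i=1..m. \<upsilon> (As i)) - real (l Attained) * \<upsilon> A - real (l Normalized)"
    by (rule certificate_nk_cover[OF fin A zero])
  have "m \<le> card M * fourier_motzkin_bound (card \<Omega>) 1"
    unfolding m using bounded sum_bounded_above[of M "\<lambda>X. l (Dominated X)"]
    by (simp add: constraints_def)
  also have "card M \<le> card (Pow \<Omega>)"
    using fin sets_into_space by (intro card_mono) auto
  finally have m_bound: "m \<le> cover_bound (card \<Omega>)"
    using fin by (simp add: cover_bound_def card_Pow)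
  have "fourier_motzkin_bound (card \<Omega>) 1 \<le> cover_bound (card \<Omega>)"
    by (simp add: cover_bound_def)
  then have "l Attained \<le> cover_bound (card \<Omega>)" "l Normalized \<le> cover_bound (card \<Omega>)"
    using bounded by (auto simp: constraints_def)
  then have "real (l Normalized) + real (l Attained) * \<upsilon> A \<le> (\<Sum>i=1..m. \<upsilon> (As i))"
    using ineqs[unfolded nk_cover_inequalities_def, rule_format,
        OF m_bound _ _ A As[rule_format] cover]
    by blast
  then show ?thesis unfolding rhs by simp
qed

lemma exists_dominated_weights_attaining:
  assumes fin: "finite \<Omega>" and A: "A \<in> M" and \<upsilon>\<Omega>: "\<upsilon> \<Omega> = 1"
    and ineqs: "nk_cover_inequalities (cover_bound (card \<Omega>)) \<Omega> M \<upsilon>"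
  obtains p where "\<forall>x\<in>\<Omega>. 0 \<le> p x" "(\<Sum>x\<in>\<Omega>. p x) = 1"
    "\<forall>X\<in>M. (\<Sum>x\<in>X. p x) \<le> \<upsilon> X" "\<upsilon> A \<le> (\<Sum>x\<in>A. p x)"
proof -
  let ?J = "constraints \<Omega> M" and ?a = "constraint_coeff \<Omega> A" and ?b = "constraint_rhs \<upsilon> A"
  have finJ: "finite ?J" using fin finite_sets[OF fin] by (rule finite_constraints)
  have "A \<subseteq> \<Omega>" using A sets_into_space by blast
  then have outside: "?a j x = 0" if "j \<in> ?J" "x \<notin> \<Omega>" for j x
    using that sets_into_space by (cases j) (auto simp: constraints_def)
  have unit_bound: "\<bar>?a j x\<bar> \<le> 1" for j x by (cases j) auto
  define S :: "('a constraint \<Rightarrow> nat) set" where "S = (\<lambda>j. indicator {j}) ` ?J"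
  have "\<exists>p. \<forall>l\<in>S. comb_lhs ?J ?a \<Omega> l p \<le> comb_rhs ?J ?b l"
  proof (rule fourier_motzkin[OF fin])
    show "finite S" using finJ by (simp add: S_def)
    show "\<forall>l\<in>S. \<forall>x. x \<notin> \<Omega> \<longrightarrow> comb_coeff ?J ?a l x = 0"
      using outside finJ by (auto simp: S_def comb_coeff_indicator)
    show "\<forall>l\<in>S. \<forall>j\<in>?J. l j \<le> 1" by (auto simp: S_def indicator_def)
    show "\<forall>l\<in>S. \<forall>x. \<bar>comb_coeff ?J ?a l x\<bar> \<le> int 1"
      using unit_bound finJ by (auto simp: S_def comb_coeff_indicator)
    show "\<forall>l. (\<forall>x. comb_coeff ?J ?a l x = 0) \<longrightarrow>
        (\<forall>j\<in>?J. l j \<le> fourier_motzkin_bound (card \<Omega>) 1) \<longrightarrow> 0 \<le> comb_rhs ?J ?b l"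
      using certificate_rhs_nonneg[OF fin A ineqs] by blast
  qed
  then obtain p where "\<forall>l\<in>S. comb_lhs ?J ?a \<Omega> l p \<le> comb_rhs ?J ?b l" ..
  then have p: "(\<Sum>x\<in>\<Omega>. of_int (?a j x) * p x) \<le> ?b j" if "j \<in> ?J" for j
    using finJ that by (auto simp: S_def comb_lhs_def comb_coeff_indicator comb_rhs_indicator)
  show ?thesis
  proof
    show "\<forall>y\<in>\<Omega>. 0 \<le> p y"
    proof
      fix y assume "y \<in> \<Omega>"
      then show "0 \<le> p y"
        using p[of "Nonneg y"] sum_of_int_if_mem[OF fin, of "{y}" "-1"]
        by (simp add: constraints_def)
    qed
    show "\<forall>X\<in>M. (\<Sum>x\<in>X. p x) \<le> \<upsilon> X"
    proof
      fix X assume "X \<in> M"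
      then show "(\<Sum>x\<in>X. p x) \<le> \<upsilon> X"
        using p[of "Dominated X"] sum_of_int_if_mem[OF fin, of X 1] sets_into_space
        by (simp add: constraints_def)
    qed
    show "\<upsilon> A \<le> (\<Sum>x\<in>A. p x)"
      using p[of Attained] sum_of_int_if_mem[OF fin \<open>A \<subseteq> \<Omega>\<close>, of "-1"] by (simp add: constraints_def)
    have "(\<Sum>x\<in>\<Omega>. p x) \<le> 1"
      using p[of "Dominated \<Omega>"] sum_of_int_if_mem[OF fin, of \<Omega> 1] \<upsilon>\<Omega> by (simp add: constraints_def)
    moreover have "1 \<le> (\<Sum>x\<in>\<Omega>. p x)"
      using p[of Normalized] sum_of_int_if_mem[OF fin, of \<Omega> "-1"] by (simp add: constraints_def)
    ultimately show "(\<Sum>x\<in>\<Omega>. p x) = 1" by simp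
  qed
qed

lemma dominated_measures_upper_envelope:
  assumes fin: "finite \<Omega>" and "\<upsilon> \<Omega> = 1"
    and "nk_cover_inequalities (cover_bound (card \<Omega>)) \<Omega> M \<upsilon>"
  shows "\<exists>P. (\<forall>\<mu>\<in>P. prob_measure_on \<Omega> M \<mu>) \<and> P \<noteq> {} \<and> (\<forall>X\<in>M. \<upsilon> X = (SUP \<mu>\<in>P. \<mu> X))"
proof -
  let ?P = "{\<mu>. prob_measure_on \<Omega> M \<mu> \<and> (\<forall>X\<in>M. \<mu> X \<le> \<upsilon> X)}"
  have attained: "\<upsilon> X \<in> (\<lambda>\<mu>. \<mu> X) ` ?P" if X: "X \<in> M" for X
  proof -
    obtain p where p: "\<forall>x\<in>\<Omega>. 0 \<le> p x" "(\<Sum>x\<in>\<Omega>. p x) = 1"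
      "\<forall>X\<in>M. (\<Sum>x\<in>X. p x) \<le> \<upsilon> X" "\<upsilon> X \<le> (\<Sum>x\<in>X. p x)"
      using exists_dominated_weights_attaining[OF fin X assms(2,3)] .
    have "(\<lambda>X. \<Sum>x\<in>X. p x) \<in> ?P" using prob_measure_on_weights[OF fin p(1,2)] p(3) by simp
    moreover have "\<upsilon> X = (\<Sum>x\<in>X. p x)" using p(3,4) X by (simp add: order_antisym)
    ultimately show ?thesis by (rule image_eqI[rotated, where f = "\<lambda>\<mu>. \<mu> X"])
  qed
  show ?thesis
  proof (intro exI[of _ ?P] conjI ballI)
    fix X assume "X \<in> M"
    show "\<upsilon> X = (SUP \<mu>\<in>?P. \<mu> X)"
      using attained[OF \<open>X \<in> M\<close>] \<open>X \<in> M\<close> by (intro cSup_eq_maximum[symmetric]) auto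
  qed (use attained[OF top] in auto)
qed

end

lemma upper_envelope_iff_nk_cover_inequalities:
  assumes fin: "finite \<Omega>" and "algebra \<Omega> \<Sigma>"
  shows "(\<exists>P. (\<forall>\<mu>\<in>P. prob_measure_on \<Omega> \<Sigma> \<mu>) \<and> P \<noteq> {} \<and> (\<forall>X\<in>\<Sigma>. \<upsilon> X = (SUP \<mu>\<in>P. \<mu> X)))
    \<longleftrightarrow> \<upsilon> {} = 0 \<and> \<upsilon> \<Omega> = 1 \<and> nk_cover_inequalities (cover_bound (card \<Omega>)) \<Omega> \<Sigma> \<upsilon>"
proof -
  interpret algebra \<Omega> \<Sigma> by fact
  show ?thesis
  proof
    assume "\<exists>P. (\<forall>\<mu>\<in>P. prob_measure_on \<Omega> \<Sigma> \<mu>) \<and> P \<noteq> {} \<and> (\<forall>X\<in>\<Sigma>. \<upsilon> X = (SUP \<mu>\<in>P. \<mu> X))"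
    then obtain P where P: "\<forall>\<mu>\<in>P. prob_measure_on \<Omega> \<Sigma> \<mu>" "P \<noteq> {}" "\<forall>X\<in>\<Sigma>. \<upsilon> X = (SUP \<mu>\<in>P. \<mu> X)"
      by blast
    then show "\<upsilon> {} = 0 \<and> \<upsilon> \<Omega> = 1 \<and> nk_cover_inequalities (cover_bound (card \<Omega>)) \<Omega> \<Sigma> \<upsilon>"
      using upper_envelope_normalized[OF P] upper_envelope_nk_cover[OF fin P]
      unfolding nk_cover_inequalities_def by blast
  next
    assume "\<upsilon> {} = 0 \<and> \<upsilon> \<Omega> = 1 \<and> nk_cover_inequalities (cover_bound (card \<Omega>)) \<Omega> \<Sigma> \<upsilon>"
    then show "\<exists>P. (\<forall>\<mu>\<in>P. prob_measure_on \<Omega> \<Sigma> \<mu>) \<and> P \<noteq> {} \<and> (\<forall>X\<in>\<Sigma>. \<upsilon> X = (SUP \<mu>\<in>P. \<mu> X))"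
      using dominated_measures_upper_envelope[OF fin] by blast
  qed
qed

theorem theorem2:
  "\<exists>B :: nat \<Rightarrow> nat. \<forall>(\<Omega> :: nat set) (\<Sigma> :: nat set set) (\<upsilon> :: nat set \<Rightarrow> real).
     finite \<Omega> \<longrightarrow> algebra \<Omega> \<Sigma> \<longrightarrow>
     ((\<exists>P. (\<forall>\<mu>\<in>P. prob_measure_on \<Omega> \<Sigma> \<mu>) \<and> P \<noteq> {} \<and>
           (\<forall>X\<in>\<Sigma>. \<upsilon> X = (SUP \<mu>\<in>P. \<mu> X)))
      \<longleftrightarrow>
      (\<upsilon> {} = 0 \<and> \<upsilon> \<Omega> = 1 \<and>
       (\<forall>m n k. m \<le> B (card \<Omega>) \<longrightarrow> n \<le> B (card \<Omega>) \<longrightarrow> k \<le> B (card \<Omega>) \<longrightarrow>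
          (\<forall>A (As :: nat \<Rightarrow> nat set). A \<in> \<Sigma> \<longrightarrow> (\<forall>i\<in>{1..m}. As i \<in> \<Sigma>) \<longrightarrow>
             nk_cover n k m As A \<Omega> \<longrightarrow>
             real k + real n * \<upsilon> A \<le> (\<Sum>i=1..m. \<upsilon> (As i))))))"
  by (intro exI[of _ cover_bound] allI impI
      upper_envelope_iff_nk_cover_inequalities[unfolded nk_cover_inequalities_def])

end
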